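(* With notation as in the context, the map $(r_0|_{\widetilde M})_*\oplus(r_1|_{\widetilde M})_*: H_2(\widetilde M)\to H_2(Z_0)\oplus H_2(Z_1)$ is an isomorphism (integral homology).
   Context: Give $\mathbf{R}^5$ the product cubical cell structure with integer vertices; $Z_0$ is its 2-skeleton, $u=e_1+\dots+e_5$, $Z_1=Z_0+u/2$. For $i=0,1$, $N(Z_i)$ is the closed $\ell^\infty$ $1/4$-neighborhood of $Z_i$; $N(Z_0)\cup N(Z_1)=\mathbf{R}^5$ and $N(Z_0)\cap N(Z_1)=\widetilde M$, the set of points at $\ell^\infty$-distance $1/4$ from both $Z_0$ and $Z_1$. Writing $I=[-1/4,1/4]$, for each $k$-cell $e^k\cong[0,1]^k$ of $Z_i$ ($k\le 2$) let $e^k_\circ\cong[1/4,3/4]^k$ be the concentric subcube and $B^k=e^k_\circ\times I^{5-k}$ its normal $1/4$-thickening; $N(Z_i)$ is the union of all $B^k$. The retraction $r_i: N(Z_i)\to Z_i$ is defined on each $B^k$ as the coordinate projection $B^k\to e^k_\circ$ followed by the scaling by factor $2$ about the center, $e^k_\circ\to e^k$; it is a $\mathbf{Z}^5$-equivariant deformation retraction. *)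

theory Defs
  imports "HOL-Analysis.Analysis" "HOL-Homology.Homology"
begin

text \<open>Z0: 2-skeleton of the integer cubical structure: points with at most 2 non-integer coordinates.\<close>
definition Z0 :: "(real^5) set" where
  "Z0 = {x. card {j. x $ j \<notin> \<int>} \<le> 2}"

definition uvec :: "real^5" where
  "uvec = (\<chi> j. 1)"

definition Z1 :: "(real^5) set" where
  "Z1 = (\<lambda>z. z + (1/2) *\<^sub>R uvec) ` Z0"

definition Nbhd :: "(real^5) set \<Rightarrow> (real^5) set" where
  "Nbhd Z = {x. \<exists>z\<in>Z. \<forall>j. \<bar>x $ j - z $ j\<bar> \<le> 1/4}"

definition Mtilde :: "(real^5) set" where
  "Mtilde = Nbhd Z0 \<inter> Nbhd Z1"

text \<open>Coordinatewise description of r_0: on a normal coordinate (within 1/4 of an integer n)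
  project to n; on a tangent coordinate t in [n+1/4, n+3/4] rescale by 2 about n+1/2.\<close>
definition rho :: "real \<Rightarrow> real" where
  "rho t = of_int \<lfloor>t\<rfloor> + max 0 (min 1 (2 * (t - of_int \<lfloor>t\<rfloor>) - 1/2))"

definition r0 :: "real^5 \<Rightarrow> real^5" where
  "r0 x = (\<chi> j. rho (x $ j))"

definition r1 :: "real^5 \<Rightarrow> real^5" where
  "r1 x = r0 (x - (1/2) *\<^sub>R uvec) + (1/2) *\<^sub>R uvec"

end

theory Submission
  imports Defs
begin

(* Each r_i is a homotopy equivalence N(Z_i) -> Z_i, the straight-line homotopy to the identity
   staying inside N(Z_i) and inside Z_i. So it suffices that the inclusions induce
   H_2(N(Z0) \<inter> N(Z1)) = H_2(N(Z0)) \<oplus> H_2(N(Z1)). This is the Mayer-Vietoris isomorphism of the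
   cover R^5 = N(Z0) \<union> N(Z1), flanked by H_2(R^5) = H_3(R^5) = 0. The cover is excisive:
   a coordinatewise monotone piecewise linear map, homotopic to the identity through maps preserving
   N(Z0) and N(Z1), squeezes the 3/8-neighbourhood of Z1 into N(Z1), and the interior of that wider
   neighbourhood contains the closure of the complement of N(Z0). *)

lemma carrier_prod_subset_image_paired_hom:
  assumes "group G" "group H" "comm_group K"
    and f: "f \<in> hom G H" "f ` carrier G = carrier H"
    and g: "g \<in> hom G K" "g ` kernel G H f = carrier K"
  shows "carrier H \<times> carrier K \<subseteq> (\<lambda>a. (f a, g a)) ` carrier G"
proof
  interpret G: group G by fact
  interpret H: group H by fact
  interpret K: comm_group K by fact
  fix z assume "z \<in> carrier H \<times> carrier K"
  then obtain x y where z: "z = (x, y)" and x: "x \<in> carrier H" and y: "y \<in> carrier K"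
    by blast
  have "x \<in> f ` carrier G"
    using x f(2) by simp
  then obtain a where a: "x = f a" "a \<in> carrier G"
    by (rule imageE)
  have ga: "g a \<in> carrier K"
    using a(2) g(1) by (simp add: hom_in_carrier)
  \<comment> \<open>Correct a by an element of the kernel of f that g sends to y - g a.\<close>
  have "y \<otimes>\<^bsub>K\<^esub> inv\<^bsub>K\<^esub> g a \<in> g ` kernel G H f"
    using ga y g(2) by simp
  then obtain k where k: "y \<otimes>\<^bsub>K\<^esub> inv\<^bsub>K\<^esub> g a = g k" "k \<in> kernel G H f"
    by (rule imageE)
  have kG: "k \<in> carrier G" and fk: "f k = \<one>\<^bsub>H\<^esub>"
    using k(2) by (simp_all add: kernel_def)
  have "f (a \<otimes>\<^bsub>G\<^esub> k) = x"
    using a kG fk hom_mult[OF f(1)] hom_in_carrier[OF f(1) a(2)] by simp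
  moreover have "g (a \<otimes>\<^bsub>G\<^esub> k) = y"
    using a kG k(1)[symmetric] ga y hom_mult[OF g(1)] by (simp add: K.m_lcomm)
  ultimately show "z \<in> (\<lambda>a. (f a, g a)) ` carrier G"
    unfolding z using a kG by (intro image_eqI[of _ _ "a \<otimes>\<^bsub>G\<^esub> k"]) simp_all
qed

lemma iso_paired_hom_of_bij_on_kernel:
  assumes G: "group G" and H: "group H" and K: "comm_group K"
    and f: "f \<in> hom G H" "f ` carrier G = carrier H"
    and g: "g \<in> hom G K" "bij_betw g (kernel G H f) (carrier K)"
  shows "(\<lambda>a. (f a, g a)) \<in> iso G (H \<times>\<times> K)"
proof -
  have fg: "group_hom G (H \<times>\<times> K) (\<lambda>a. (f a, g a))"
    using G H K f g by (simp add: group_hom_def group_hom_axioms_def hom_paired DirProd_group comm_group.axioms(2))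
  have one_kernel: "\<one>\<^bsub>G\<^esub> \<in> kernel G H f"
    using hom_one[OF f(1) G H] group.is_monoid[OF G] by (simp add: kernel_def monoid.one_closed)
  have g_one: "g \<one>\<^bsub>G\<^esub> = \<one>\<^bsub>K\<^esub>"
    using hom_one[OF g(1) G comm_group.axioms(2)[OF K]] .
  have "kernel G (H \<times>\<times> K) (\<lambda>a. (f a, g a)) = {\<one>\<^bsub>G\<^esub>}"
  proof (intro equalityI subsetI)
    fix a assume "a \<in> kernel G (H \<times>\<times> K) (\<lambda>a. (f a, g a))"
    then have "a \<in> kernel G H f" "g a = g \<one>\<^bsub>G\<^esub>"
      using g_one by (simp_all add: kernel_def)
    with g(2) one_kernel show "a \<in> {\<one>\<^bsub>G\<^esub>}"
      unfolding bij_betw_def inj_on_def by blast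
  qed (use one_kernel g_one in \<open>simp add: kernel_def\<close>)
  then have "inj_on (\<lambda>a. (f a, g a)) (carrier G)"
    by (rule group_hom.trivial_ker_imp_inj[OF fg])
  moreover have "(\<lambda>a. (f a, g a)) ` carrier G = carrier (H \<times>\<times> K)"
    using carrier_prod_subset_image_paired_hom[OF G H K f g(1) bij_betw_imp_surj_on[OF g(2)]]
      group_hom.hom_closed[OF fg]
    by auto
  ultimately show ?thesis
    unfolding iso_iff using group_hom.homh[OF fg] by (intro conjI)
qed

lemma hom_induced_relativization_trivial:
  assumes HX: "trivial_group (homology_group p X)"
    and inj: "inj_on (hom_induced p (subtopology X A) (A \<inter> B) X B id)
      (carrier (relative_homology_group p (subtopology X A) (A \<inter> B)))"
  shows "hom_induced p (subtopology X A) {} (subtopology X A) (A \<inter> B) id \<alpha>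
    = \<one>\<^bsub>relative_homology_group p (subtopology X A) (A \<inter> B)\<^esub>"
proof -
  let ?jA = "hom_induced p (subtopology X A) {} (subtopology X A) (A \<inter> B) id"
  let ?E = "hom_induced p (subtopology X A) (A \<inter> B) X B id"
  let ?RA = "relative_homology_group p (subtopology X A) (A \<inter> B)"
  have "?E (?jA \<alpha>) = hom_induced p X {} X B id (hom_induced p (subtopology X A) {} X {} id \<alpha>)"
    by (simp add: hom_induced_compose' continuous_map_from_subtopology)
  also have "\<dots> = \<one>\<^bsub>relative_homology_group p X B\<^esub>"
    using HX hom_induced_carrier[of p "subtopology X A" "{}" X "{}" id \<alpha>]
    by (simp add: trivial_group_def hom_one[OF hom_induced_hom])
  also have "\<dots> = ?E \<one>\<^bsub>?RA\<^esub>"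
    by (simp add: hom_one[OF hom_induced_hom])
  finally have "?E (?jA \<alpha>) = ?E \<one>\<^bsub>?RA\<^esub>" .
  moreover have "\<one>\<^bsub>?RA\<^esub> \<in> carrier ?RA"
    by (rule monoid.one_closed[OF group.is_monoid[OF group_relative_homology_group]])
  ultimately show ?thesis
    using inj_onD[OF inj] hom_induced_carrier by metis
qed

lemma iso_hom_induced_inclusions_Int_contractible:
  assumes X: "contractible_space X" and B: "topspace X \<inter> B \<noteq> {}" and "p \<noteq> 0"
    and excisive: "\<And>q. hom_induced q (subtopology X A) (A \<inter> B) X B id
      \<in> iso (relative_homology_group q (subtopology X A) (A \<inter> B)) (relative_homology_group q X B)"
  shows "(\<lambda>a. (hom_induced p (subtopology X (A \<inter> B)) {} (subtopology X A) {} id a,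
               hom_induced p (subtopology X (A \<inter> B)) {} (subtopology X B) {} id a))
    \<in> iso (homology_group p (subtopology X (A \<inter> B)))
          (homology_group p (subtopology X A) \<times>\<times> homology_group p (subtopology X B))"
proof (rule iso_paired_hom_of_bij_on_kernel)
  have subtopology_Int: "subtopology (subtopology X A) (A \<inter> B) = subtopology X (A \<inter> B)"
    by (simp add: subtopology_subtopology)
  let ?iA = "hom_induced p (subtopology X (A \<inter> B)) {} (subtopology X A) {} id"
  let ?iB = "hom_induced p (subtopology X (A \<inter> B)) {} (subtopology X B) {} id"
  let ?jA = "hom_induced p (subtopology X A) {} (subtopology X A) (A \<inter> B) id"
  let ?dA = "hom_boundary (p + 1) (subtopology X A) (A \<inter> B)"
  let ?HA = "homology_group p (subtopology X A)"
  let ?HB = "homology_group p (subtopology X B)"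
  let ?RA = "relative_homology_group p (subtopology X A) (A \<inter> B)"
  let ?R = "relative_homology_group (p + 1) (subtopology X A) (A \<inter> B)"
  have HX: "trivial_group (homology_group p X)"
    using trivial_reduced_homology_group_contractible_space[OF X] un_reduced_homology_group[OF \<open>p \<noteq> 0\<close>]
    by metis
  have "inj_on (hom_induced p (subtopology X A) (A \<inter> B) X B id) (carrier ?RA)"
    using excisive[of p] by (simp add: iso_iff)
  then have "?jA \<alpha> = \<one>\<^bsub>?RA\<^esub>" for \<alpha>
    by (rule hom_induced_relativization_trivial[OF HX])
  then have "kernel ?HA ?RA ?jA = carrier ?HA"
    by (simp add: kernel_def)
  moreover have "kernel ?HA ?RA ?jA = ?iA ` carrier (homology_group p (subtopology X (A \<inter> B)))"
    using homology_exactness_axiom_3[of p "subtopology X A" "A \<inter> B"] by (simp add: subtopology_Int)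
  ultimately show "?iA ` carrier (homology_group p (subtopology X (A \<inter> B))) = carrier ?HA"
    by simp
  have kernel_iA: "kernel (homology_group p (subtopology X (A \<inter> B))) ?HA ?iA = ?dA ` carrier ?R"
    using homology_exactness_axiom_2[of "p + 1" "subtopology X A" "A \<inter> B"] by (simp add: subtopology_Int)
  \<comment> \<open>By naturality, i_B after d_A is the boundary map of (X, B) after excision, a bijection.\<close>
  have "hom_boundary (p + 1) X B \<circ> hom_induced (p + 1) (subtopology X A) (A \<inter> B) X B id = ?iB \<circ> ?dA"
    using naturality_hom_induced[of "subtopology X A" X id "A \<inter> B" B "p + 1"]
    by (simp add: continuous_map_from_subtopology subtopology_Int)
  moreover have "hom_boundary (p + 1) X B \<circ> hom_induced (p + 1) (subtopology X A) (A \<inter> B) X B id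
      \<in> iso ?R ?HB"
    using iso_set_trans[OF excisive[of "p + 1"] iso_relative_homology_of_contractible[OF X B, of "p + 1"]]
    by (simp add: un_reduced_homology_group[OF \<open>p \<noteq> 0\<close>])
  ultimately have "bij_betw (?iB \<circ> ?dA) (carrier ?R) (carrier ?HB)"
    by (simp only: iso_def mem_Collect_eq)
  then have "inj_on (?iB \<circ> ?dA) (carrier ?R)" "(?iB \<circ> ?dA) ` carrier ?R = carrier ?HB"
    by (simp_all only: bij_betw_def)
  then have "inj_on ?iB (?dA ` carrier ?R)" "?iB ` ?dA ` carrier ?R = carrier ?HB"
    by (simp_all only: inj_on_imageI image_comp)
  then show "bij_betw ?iB (kernel (homology_group p (subtopology X (A \<inter> B))) ?HA ?iA) (carrier ?HB)"
    by (simp only: kernel_iA bij_betw_def)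
qed (simp_all add: hom_induced_hom abelian_homology_group)

lemma iso_paired_hom_induced_comp:
  assumes paired: "(\<lambda>a. (hom_induced p X {} Y1 {} g1 a, hom_induced p X {} Y2 {} g2 a))
      \<in> iso (homology_group p X) (homology_group p Y1 \<times>\<times> homology_group p Y2)"
    and g: "continuous_map X Y1 g1" "continuous_map X Y2 g2"
    and f: "continuous_map Y1 W1 f1" "continuous_map Y2 W2 f2"
    and iso: "hom_induced p Y1 {} W1 {} f1 \<in> iso (homology_group p Y1) (homology_group p W1)"
      "hom_induced p Y2 {} W2 {} f2 \<in> iso (homology_group p Y2) (homology_group p W2)"
  shows "(\<lambda>a. (hom_induced p X {} W1 {} (f1 \<circ> g1) a, hom_induced p X {} W2 {} (f2 \<circ> g2) a))
      \<in> iso (homology_group p X) (homology_group p W1 \<times>\<times> homology_group p W2)"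
proof -
  have "(\<lambda>a. (hom_induced p X {} W1 {} (f1 \<circ> g1) a, hom_induced p X {} W2 {} (f2 \<circ> g2) a))
      = (\<lambda>(x, y). (hom_induced p Y1 {} W1 {} f1 x, hom_induced p Y2 {} W2 {} f2 y))
        \<circ> (\<lambda>a. (hom_induced p X {} Y1 {} g1 a, hom_induced p X {} Y2 {} g2 a))"
    using g f by (simp add: fun_eq_iff hom_induced_compose')
  then show ?thesis
    using iso_set_trans[OF paired group.DirProd_iso_set_trans[OF group_relative_homology_group iso]]
    by (simp only:)
qed

lemma iso_hom_induced_relativization_deformation:
  assumes "continuous_map X X f" "T \<subseteq> S" "f \<in> S \<rightarrow> T"
    and "homotopic_with (\<lambda>h. h \<in> T \<rightarrow> T) X X f id" "homotopic_with (\<lambda>h. h \<in> S \<rightarrow> S) X X f id"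
  shows "hom_induced p X T X S id \<in> iso (relative_homology_group p X T) (relative_homology_group p X S)"
  using assms by (intro homotopy_equivalence_relative_homology_group_isomorphism[where g = f]) auto

lemma homotopic_with_straight_line_id:
  fixes f :: "'a::real_normed_vector \<Rightarrow> 'a"
  assumes contf: "continuous_on S f"
    and segment: "\<And>t x. 0 \<le> t \<Longrightarrow> t \<le> 1 \<Longrightarrow> x \<in> S \<Longrightarrow> (1 - t) *\<^sub>R f x + t *\<^sub>R x \<in> S"
    and P: "\<And>t. 0 \<le> t \<Longrightarrow> t \<le> 1 \<Longrightarrow> P (\<lambda>x. (1 - t) *\<^sub>R f x + t *\<^sub>R x)"
  shows "homotopic_with P (top_of_set S) (top_of_set S) f id"
  unfolding homotopic_with_def
proof (intro exI conjI)
  let ?h = "\<lambda>y. (1 - fst y) *\<^sub>R f (snd y) + fst y *\<^sub>R snd y"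
  have "continuous_on ({0..1} \<times> S) (\<lambda>y. f (snd y))"
    by (rule continuous_on_compose2[OF contf continuous_on_snd]) auto
  then show "continuous_map (prod_topology (top_of_set {0..1}) (top_of_set S)) (top_of_set S) ?h"
    using segment by (auto intro!: continuous_intros)
qed (use P in auto)

lemma contractible_space_euclidean: "contractible_space (euclidean :: 'a::real_normed_vector topology)"
  using contractible_space_top_of_set[of "UNIV :: 'a set"] convex_imp_contractible[OF convex_UNIV]
  by simp

section \<open>Neighbourhoods of the shifted 2-skeleta\<close>

(* all_but_two (grid_near c r) is the closed l-infinity r-neighbourhood of the 2-skeleton of the
   cubical structure translated by c*u: a point is within r of it iff at most two of its coordinates
   are farther than r from c + Z. *)
definition grid_near :: "real \<Rightarrow> real \<Rightarrow> real \<Rightarrow> bool" where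
  "grid_near c r t \<longleftrightarrow> (\<exists>n::int. \<bar>t - of_int n - c\<bar> \<le> r)"

definition all_but_two :: "(real \<Rightarrow> bool) \<Rightarrow> (real^5) set" where
  "all_but_two P = {x. card {j. \<not> P (x $ j)} \<le> 2}"

lemma grid_near_mono: "r \<le> r' \<Longrightarrow> grid_near c r t \<Longrightarrow> grid_near c r' t"
  unfolding grid_near_def by (meson order_trans)

lemma grid_near_zero_iff: "grid_near c 0 t \<longleftrightarrow> t - c \<in> \<int>"
  by (auto simp: grid_near_def Ints_def algebra_simps)

lemma all_but_two_mono:
  assumes "x \<in> all_but_two P" and "\<And>j. P (x $ j) \<Longrightarrow> Q (y $ j)"
  shows "y \<in> all_but_two Q"
proof -
  have "card {j. \<not> Q (y $ j)} \<le> card {j. \<not> P (x $ j)}"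
    using assms(2) by (intro card_mono) auto
  then show ?thesis
    using assms(1) by (simp add: all_but_two_def)
qed

lemma all_but_two_subset: "(\<And>t. P t \<Longrightarrow> Q t) \<Longrightarrow> all_but_two P \<subseteq> all_but_two Q"
  using all_but_two_mono by blast

lemma Z0_eq: "Z0 = all_but_two (grid_near 0 0)"
  by (simp add: Z0_def all_but_two_def grid_near_zero_iff)

lemma Z1_eq: "Z1 = all_but_two (grid_near (1/2) 0)"
proof -
  have "Z1 = (\<lambda>z. z + (1/2) *\<^sub>R uvec) ` Z0"
    by (simp add: Z1_def)
  also have "\<dots> = {z. z - (1/2) *\<^sub>R uvec \<in> Z0}"
    by (force simp: image_iff)
  also have "\<dots> = all_but_two (grid_near (1/2) 0)"
    by (simp add: Z0_def all_but_two_def grid_near_zero_iff uvec_def)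
  finally show ?thesis .
qed

lemma Nbhd_all_but_two: "Nbhd (all_but_two (grid_near c 0)) = all_but_two (grid_near c (1/4))"
proof
  show "Nbhd (all_but_two (grid_near c 0)) \<subseteq> all_but_two (grid_near c (1/4))"
  proof
    fix x assume "x \<in> Nbhd (all_but_two (grid_near c 0))"
    then obtain z where z: "z \<in> all_but_two (grid_near c 0)" and d: "\<And>j. \<bar>x $ j - z $ j\<bar> \<le> 1/4"
      by (auto simp: Nbhd_def)
    have "grid_near c (1/4) (x $ j)" if zj: "grid_near c 0 (z $ j)" for j
    proof -
      obtain n :: int where "z $ j - c = of_int n"
        using zj by (auto simp: grid_near_zero_iff elim: Ints_cases)
      then have "x $ j - of_int n - c = x $ j - z $ j"
        by simp
      then show ?thesis
        using d[of j] unfolding grid_near_def by metis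
    qed
    then show "x \<in> all_but_two (grid_near c (1/4))"
      using all_but_two_mono[OF z] by blast
  qed
  show "all_but_two (grid_near c (1/4)) \<subseteq> Nbhd (all_but_two (grid_near c 0))"
  proof
    fix x assume x: "x \<in> all_but_two (grid_near c (1/4))"
    define n where "n j = (SOME n::int. \<bar>x $ j - of_int n - c\<bar> \<le> 1/4)" for j
    define z where "z = (\<chi> j. if grid_near c (1/4) (x $ j) then of_int (n j) + c else x $ j)"
    have n: "\<bar>x $ j - of_int (n j) - c\<bar> \<le> 1/4" if "grid_near c (1/4) (x $ j)" for j
      using that unfolding grid_near_def n_def by (rule someI_ex)
    have "z \<in> all_but_two (grid_near c 0)"
      by (rule all_but_two_mono[OF x]) (simp add: z_def grid_near_zero_iff)
    moreover have "\<bar>x $ j - z $ j\<bar> \<le> 1/4" for j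
      using n[of j] by (simp add: z_def algebra_simps)
    ultimately show "x \<in> Nbhd (all_but_two (grid_near c 0))"
      unfolding Nbhd_def by blast
  qed
qed

abbreviation nbhd0 :: "(real^5) set" where
  "nbhd0 \<equiv> all_but_two (grid_near 0 (1/4))"

abbreviation nbhd1 :: "(real^5) set" where
  "nbhd1 \<equiv> all_but_two (grid_near (1/2) (1/4))"

abbreviation nbhd1_wide :: "(real^5) set" where
  "nbhd1_wide \<equiv> all_but_two (grid_near (1/2) (3/8))"

lemma nbhd1_subset_nbhd1_wide: "nbhd1 \<subseteq> nbhd1_wide"
  using grid_near_mono[of "1/4" "3/8" "1/2"] by (intro all_but_two_subset) simp

lemma Mtilde_eq: "Mtilde = nbhd0 \<inter> nbhd1"
  by (simp add: Mtilde_def Z0_eq Z1_eq Nbhd_all_but_two)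

lemma nbhd1_nonempty: "nbhd1 \<noteq> {}"
proof -
  have "grid_near (1/2) (1/4) (1/2)"
    unfolding grid_near_def by (rule exI[of _ 0]) simp
  then have "(\<chi> j. 1/2) \<in> nbhd1"
    by (simp add: all_but_two_def)
  then show ?thesis
    by auto
qed

section \<open>The retractions\<close>

lemma continuous_on_floor_plus_comp_frac:
  fixes G :: "real \<Rightarrow> real"
  assumes contG: "continuous_on {0..1} G" and G1: "G 1 = G 0 + 1"
  shows "continuous_on UNIV (\<lambda>t. of_int \<lfloor>t\<rfloor> + G (frac t))"
proof -
  let ?f = "\<lambda>t. of_int \<lfloor>t\<rfloor> + G (frac t)"
  have piece: "continuous_on {of_int n .. of_int n + 1} ?f" for n :: int
  proof (rule continuous_on_eq)
    show "continuous_on {of_int n .. of_int n + 1} (\<lambda>t. of_int n + G (t - of_int n))"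
      by (intro continuous_intros continuous_on_compose2[OF contG]) auto
    show "of_int n + G (t - of_int n) = ?f t" if "t \<in> {of_int n .. of_int n + 1}" for t
    proof (cases "t = of_int n + 1")
      case True
      then show ?thesis using G1 by (simp add: frac_def)
    next
      case False
      with that have "\<lfloor>t\<rfloor> = n" by (auto simp: floor_eq_iff)
      then show ?thesis by (simp add: frac_def)
    qed
  qed
  show ?thesis
    unfolding continuous_on_eq_continuous_at[OF open_UNIV]
  proof
    fix x :: real
    let ?n = "\<lfloor>x\<rfloor>"
    have "continuous_on ({of_int (?n - 1) .. of_int (?n - 1) + 1} \<union> {of_int ?n .. of_int ?n + 1}) ?f"
      by (intro continuous_on_closed_Un piece) auto
    then have "continuous_on {of_int ?n - 1 <..< of_int ?n + 1} ?f"
      by (rule continuous_on_subset) auto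
    moreover have "x \<in> {of_int ?n - 1 <..< of_int ?n + 1}"
      by simp linarith
    ultimately show "isCont ?f x"
      using continuous_on_eq_continuous_at open_greaterThanLessThan by blast
  qed
qed

lemma continuous_on_rho: "continuous_on UNIV rho"
proof -
  have "continuous_on UNIV (\<lambda>t::real. of_int \<lfloor>t\<rfloor> + max 0 (min 1 (2 * frac t - 1/2)))"
    by (rule continuous_on_floor_plus_comp_frac) (auto intro!: continuous_intros)
  then show ?thesis
    by (simp add: rho_def[abs_def] frac_def)
qed

lemma rho_eq_of_int:
  assumes "\<bar>s - of_int n\<bar> \<le> 1/4"
  shows "rho s = of_int n"
proof (cases "of_int n \<le> s")
  case True
  then have "\<lfloor>s\<rfloor> = n" using assms by (auto simp: floor_eq_iff abs_if)
  then show ?thesis using assms True by (auto simp: rho_def abs_if)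
next
  case False
  then have "\<lfloor>s\<rfloor> = n - 1" using assms by (auto simp: floor_eq_iff abs_if)
  then show ?thesis using assms False by (auto simp: rho_def abs_if)
qed

definition skeleton_retraction :: "real \<Rightarrow> real^5 \<Rightarrow> real^5" where
  "skeleton_retraction c x = (\<chi> j. rho (x $ j - c) + c)"

lemma r0_eq: "r0 = skeleton_retraction 0"
  by (simp add: r0_def skeleton_retraction_def fun_eq_iff)

lemma r1_eq: "r1 = skeleton_retraction (1/2)"
  by (simp add: r1_def r0_def skeleton_retraction_def fun_eq_iff uvec_def vec_eq_iff)

lemma continuous_on_skeleton_retraction: "continuous_on S (skeleton_retraction c)"
  unfolding skeleton_retraction_def
  by (intro continuous_on_vec_lambda continuous_intros continuous_on_compose2[OF continuous_on_rho]) auto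

lemma skeleton_retraction_in_skeleton:
  assumes "x \<in> all_but_two (grid_near c (1/4))"
  shows "skeleton_retraction c x \<in> all_but_two (grid_near c 0)"
proof (rule all_but_two_mono[OF assms])
  fix j assume "grid_near c (1/4) (x $ j)"
  then obtain n :: int where "\<bar>x $ j - c - of_int n\<bar> \<le> 1/4"
    by (auto simp: grid_near_def algebra_simps)
  then show "grid_near c 0 (skeleton_retraction c x $ j)"
    by (simp add: skeleton_retraction_def rho_eq_of_int grid_near_zero_iff)
qed

lemma continuous_map_skeleton_retraction:
  "continuous_map (top_of_set (all_but_two (grid_near c (1/4))))
    (top_of_set (all_but_two (grid_near c 0))) (skeleton_retraction c)"
  using skeleton_retraction_in_skeleton by (auto simp: continuous_on_skeleton_retraction)

lemma skeleton_retraction_segment: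
  assumes x: "x \<in> all_but_two (grid_near c r)" and "r \<le> 1/4" "0 \<le> t" "t \<le> 1"
  shows "(1 - t) *\<^sub>R skeleton_retraction c x + t *\<^sub>R x \<in> all_but_two (grid_near c r)"
proof (rule all_but_two_mono[OF x])
  fix j assume "grid_near c r (x $ j)"
  then obtain n :: int where n: "\<bar>x $ j - of_int n - c\<bar> \<le> r"
    by (auto simp: grid_near_def)
  then have "rho (x $ j - c) = of_int n"
    using \<open>r \<le> 1/4\<close> by (intro rho_eq_of_int) (simp add: algebra_simps)
  then have "((1 - t) *\<^sub>R skeleton_retraction c x + t *\<^sub>R x) $ j - of_int n - c
      = t * (x $ j - of_int n - c)"
    by (simp add: skeleton_retraction_def algebra_simps)
  moreover have "\<bar>t * (x $ j - of_int n - c)\<bar> \<le> r"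
    using n \<open>0 \<le> t\<close> \<open>t \<le> 1\<close> mult_left_le_one_le[of "\<bar>x $ j - of_int n - c\<bar>" t]
    by (simp add: abs_mult)
  ultimately show "grid_near c r (((1 - t) *\<^sub>R skeleton_retraction c x + t *\<^sub>R x) $ j)"
    unfolding grid_near_def by metis
qed

lemma iso_hom_induced_skeleton_retraction:
  "hom_induced p (top_of_set (all_but_two (grid_near c (1/4)))) {}
      (top_of_set (all_but_two (grid_near c 0))) {} (skeleton_retraction c)
    \<in> iso (homology_group p (top_of_set (all_but_two (grid_near c (1/4)))))
          (homology_group p (top_of_set (all_but_two (grid_near c 0))))"
proof (rule homotopy_equivalence_homology_group_isomorphism[OF continuous_map_skeleton_retraction, where g = id])
  have "all_but_two (grid_near c 0) \<subseteq> all_but_two (grid_near c (1/4))"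
    using grid_near_mono[of 0 "1/4" c] by (intro all_but_two_subset) simp
  then show "continuous_map (top_of_set (all_but_two (grid_near c 0)))
      (top_of_set (all_but_two (grid_near c (1/4)))) id"
    by auto
  show "homotopic_with (\<lambda>h. True) (top_of_set (all_but_two (grid_near c (1/4))))
      (top_of_set (all_but_two (grid_near c (1/4)))) (id \<circ> skeleton_retraction c) id"
    using homotopic_with_straight_line_id[OF continuous_on_skeleton_retraction]
      skeleton_retraction_segment by simp
  show "homotopic_with (\<lambda>h. True) (top_of_set (all_but_two (grid_near c 0)))
      (top_of_set (all_but_two (grid_near c 0))) (skeleton_retraction c \<circ> id) id"
    using homotopic_with_straight_line_id[OF continuous_on_skeleton_retraction]
      skeleton_retraction_segment by simp
qed

section \<open>Excisiveness of the cover\<close>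

(* On each unit interval [n, n+1] the squeeze is piecewise linear with slopes 2, 0, 2, 0, 2,
   breaking at n + 1/8, n + 3/8, n + 5/8, n + 7/8. *)
definition squeeze_profile :: "real \<Rightarrow> real" where
  "squeeze_profile s = max (max (min (2 * s) (1/4)) (min (2 * s - 1/2) (3/4))) (2 * s - 1)"

definition squeeze :: "real \<Rightarrow> real" where
  "squeeze t = of_int \<lfloor>t\<rfloor> + squeeze_profile (frac t)"

definition squeeze_vec :: "real^'n \<Rightarrow> real^'n" where
  "squeeze_vec x = (\<chi> j. squeeze (x $ j))"

lemma continuous_on_squeeze: "continuous_on UNIV squeeze"
  unfolding squeeze_def[abs_def]
  by (rule continuous_on_floor_plus_comp_frac) (auto simp: squeeze_profile_def intro!: continuous_intros)

lemma continuous_on_squeeze_vec: "continuous_on S squeeze_vec"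
  unfolding squeeze_vec_def
  by (intro continuous_on_vec_lambda continuous_on_compose2[OF continuous_on_squeeze] continuous_intros) auto

lemma squeeze_of_int_add:
  assumes "0 \<le> q" "q < 1"
  shows "squeeze (of_int n + q) = of_int n + squeeze_profile q"
proof -
  have "\<lfloor>of_int n + q\<rfloor> = n"
    using assms by (simp add: floor_eq_iff)
  then show ?thesis
    by (simp add: squeeze_def frac_def)
qed

lemma mono_squeeze: "mono squeeze"
proof
  fix a b :: real assume "a \<le> b"
  show "squeeze a \<le> squeeze b"
  proof (cases "\<lfloor>a\<rfloor> = \<lfloor>b\<rfloor>")
    case True
    then have "squeeze_profile (frac a) \<le> squeeze_profile (frac b)"
      using \<open>a \<le> b\<close> by (simp add: frac_def squeeze_profile_def) linarith
    then show ?thesis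
      using True by (simp add: squeeze_def)
  next
    case False
    then have "of_int \<lfloor>a\<rfloor> + 1 \<le> (of_int \<lfloor>b\<rfloor> :: real)"
      using floor_mono[OF \<open>a \<le> b\<close>] by linarith
    moreover have "squeeze_profile (frac a) \<le> 1" "0 \<le> squeeze_profile (frac b)"
      using frac_ge_0[of a] frac_lt_1[of a] frac_ge_0[of b] frac_lt_1[of b]
      unfolding squeeze_profile_def by linarith+
    ultimately show ?thesis
      by (simp add: squeeze_def)
  qed
qed

lemma squeeze_near_int:
  assumes "\<bar>t - of_int n\<bar> \<le> 1/4"
  shows "\<bar>squeeze t - of_int n\<bar> \<le> 1/4"
proof -
  have "of_int (n - 1) + 3/4 \<le> t" "t \<le> of_int n + 1/4"
    using assms unfolding abs_le_iff of_int_diff by linarith+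
  then have "squeeze (of_int (n - 1) + 3/4) \<le> squeeze t" "squeeze t \<le> squeeze (of_int n + 1/4)"
    by (auto intro: monoD[OF mono_squeeze])
  moreover have "squeeze (of_int (n - 1) + 3/4) = of_int n - 1/4"
    "squeeze (of_int n + 1/4) = of_int n + 1/4"
    by (subst squeeze_of_int_add; simp add: squeeze_profile_def)+
  ultimately show ?thesis
    unfolding abs_le_iff by linarith
qed

lemma squeeze_near_half_int:
  assumes "\<bar>t - of_int n - 1/2\<bar> \<le> 3/8"
  shows "\<bar>squeeze t - of_int n - 1/2\<bar> \<le> 1/4"
proof -
  have "of_int n + 1/8 \<le> t" "t \<le> of_int n + 7/8"
    using assms unfolding abs_le_iff of_int_diff by linarith+
  then have "squeeze (of_int n + 1/8) \<le> squeeze t" "squeeze t \<le> squeeze (of_int n + 7/8)"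
    by (auto intro: monoD[OF mono_squeeze])
  moreover have "squeeze (of_int n + 1/8) = of_int n + 1/4" "squeeze (of_int n + 7/8) = of_int n + 3/4"
    by (subst squeeze_of_int_add; simp add: squeeze_profile_def)+
  ultimately show ?thesis
    unfolding abs_le_iff by linarith
qed

lemma grid_near_segment:
  assumes s: "\<And>n::int. \<bar>t - of_int n - c\<bar> \<le> r \<Longrightarrow> \<bar>s - of_int n - c\<bar> \<le> r"
    and "grid_near c r t" "0 \<le> \<tau>" "\<tau> \<le> 1"
  shows "grid_near c r ((1 - \<tau>) * s + \<tau> * t)"
proof -
  obtain n :: int where t: "\<bar>t - of_int n - c\<bar> \<le> r"
    using assms(2) by (auto simp: grid_near_def)
  have "\<bar>(1 - \<tau>) * (s - of_int n - c) + \<tau> * (t - of_int n - c)\<bar> \<le> (1 - \<tau>) * r + \<tau> * r"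
    using s[OF t] t \<open>0 \<le> \<tau>\<close> \<open>\<tau> \<le> 1\<close>
    by (intro order_trans[OF abs_triangle_ineq] add_mono) (simp_all add: abs_mult mult_left_mono)
  then have "\<bar>(1 - \<tau>) * s + \<tau> * t - of_int n - c\<bar> \<le> r"
    by (simp add: algebra_simps)
  then show ?thesis
    by (auto simp: grid_near_def)
qed

lemma squeeze_vec_segment:
  assumes "\<And>n t. \<bar>t - of_int n - c\<bar> \<le> r \<Longrightarrow> \<bar>squeeze t - of_int n - c\<bar> \<le> r"
    and x: "x \<in> all_but_two (grid_near c r)" and "0 \<le> \<tau>" "\<tau> \<le> 1"
  shows "(1 - \<tau>) *\<^sub>R squeeze_vec x + \<tau> *\<^sub>R x \<in> all_but_two (grid_near c r)"
proof (rule all_but_two_mono[OF x])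
  fix j assume "grid_near c r (x $ j)"
  then show "grid_near c r (((1 - \<tau>) *\<^sub>R squeeze_vec x + \<tau> *\<^sub>R x) $ j)"
    using assms(1,3,4) by (simp add: squeeze_vec_def grid_near_segment)
qed

lemma squeeze_vec_segment_nbhd0:
  assumes "x \<in> nbhd0" "0 \<le> \<tau>" "\<tau> \<le> 1"
  shows "(1 - \<tau>) *\<^sub>R squeeze_vec x + \<tau> *\<^sub>R x \<in> nbhd0"
proof (rule squeeze_vec_segment[OF _ assms])
  fix n :: int and t :: real assume "\<bar>t - of_int n - 0\<bar> \<le> 1/4"
  then show "\<bar>squeeze t - of_int n - 0\<bar> \<le> 1/4"
    using squeeze_near_int[of t n] by simp
qed

lemma squeeze_vec_segment_half_grid:
  assumes "x \<in> all_but_two (grid_near (1/2) r)" "1/4 \<le> r" "r \<le> 3/8" "0 \<le> \<tau>" "\<tau> \<le> 1"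
  shows "(1 - \<tau>) *\<^sub>R squeeze_vec x + \<tau> *\<^sub>R x \<in> all_but_two (grid_near (1/2) r)"
proof (rule squeeze_vec_segment[OF _ assms(1,4,5)])
  fix n :: int and t :: real assume "\<bar>t - of_int n - 1/2\<bar> \<le> r"
  then have "\<bar>squeeze t - of_int n - 1/2\<bar> \<le> 1/4"
    using \<open>r \<le> 3/8\<close> by (intro squeeze_near_half_int) simp
  then show "\<bar>squeeze t - of_int n - 1/2\<bar> \<le> r"
    using \<open>1/4 \<le> r\<close> by simp
qed

lemma squeeze_vec_nbhd1_wide:
  assumes x: "x \<in> nbhd1_wide"
  shows "squeeze_vec x \<in> nbhd1"
proof (rule all_but_two_mono[OF x])
  fix j assume "grid_near (1/2) (3/8) (x $ j)"
  then obtain n :: int where "\<bar>x $ j - of_int n - 1/2\<bar> \<le> 3/8"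
    by (auto simp: grid_near_def)
  then have "\<bar>squeeze (x $ j) - of_int n - 1/2\<bar> \<le> 1/4"
    by (rule squeeze_near_half_int)
  then show "grid_near (1/2) (1/4) (squeeze_vec x $ j)"
    unfolding grid_near_def squeeze_vec_def by auto
qed

lemma homotopic_squeeze_vec_id_half_grid:
  assumes "1/4 \<le> r" "r \<le> 3/8"
  shows "homotopic_with (\<lambda>h. h \<in> all_but_two (grid_near (1/2) r) \<rightarrow> all_but_two (grid_near (1/2) r))
    euclidean euclidean squeeze_vec id"
proof -
  have "homotopic_with (\<lambda>h. h \<in> all_but_two (grid_near (1/2) r) \<rightarrow> all_but_two (grid_near (1/2) r))
    (top_of_set UNIV) (top_of_set UNIV) squeeze_vec id"
    using assms
    by (intro homotopic_with_straight_line_id[OF continuous_on_squeeze_vec] Pi_I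
        squeeze_vec_segment_half_grid) auto
  then show ?thesis
    by simp
qed

lemma homotopic_squeeze_vec_id_nbhd0_half_grid:
  assumes "1/4 \<le> r" "r \<le> 3/8"
  shows "homotopic_with
    (\<lambda>h. h \<in> nbhd0 \<inter> all_but_two (grid_near (1/2) r) \<rightarrow> nbhd0 \<inter> all_but_two (grid_near (1/2) r))
    (top_of_set nbhd0) (top_of_set nbhd0) squeeze_vec id"
  using assms
  by (intro homotopic_with_straight_line_id[OF continuous_on_squeeze_vec] Pi_I IntI
      squeeze_vec_segment_nbhd0 squeeze_vec_segment_half_grid) auto

lemma iso_hom_induced_nbhd1_wide:
  "hom_induced p euclidean nbhd1 euclidean nbhd1_wide id
    \<in> iso (relative_homology_group p euclidean nbhd1) (relative_homology_group p euclidean nbhd1_wide)"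
proof (rule iso_hom_induced_relativization_deformation[OF _ nbhd1_subset_nbhd1_wide])
  show "continuous_map euclidean euclidean squeeze_vec"
    using continuous_on_squeeze_vec by simp
  show "squeeze_vec \<in> nbhd1_wide \<rightarrow> nbhd1"
    using squeeze_vec_nbhd1_wide by blast
qed (simp_all add: homotopic_squeeze_vec_id_half_grid)

lemma iso_hom_induced_nbhd0_Int_nbhd1_wide:
  "hom_induced p (top_of_set nbhd0) (nbhd0 \<inter> nbhd1) (top_of_set nbhd0) (nbhd0 \<inter> nbhd1_wide) id
    \<in> iso (relative_homology_group p (top_of_set nbhd0) (nbhd0 \<inter> nbhd1))
          (relative_homology_group p (top_of_set nbhd0) (nbhd0 \<inter> nbhd1_wide))"
proof (rule iso_hom_induced_relativization_deformation)
  show "continuous_map (top_of_set nbhd0) (top_of_set nbhd0) squeeze_vec"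
    using continuous_on_squeeze_vec squeeze_vec_segment_nbhd0[of _ 0] by auto
  show "squeeze_vec \<in> nbhd0 \<inter> nbhd1_wide \<rightarrow> nbhd0 \<inter> nbhd1"
    using squeeze_vec_nbhd1_wide squeeze_vec_segment_nbhd0[of _ 0] by auto
qed (use nbhd1_subset_nbhd1_wide homotopic_squeeze_vec_id_nbhd0_half_grid in auto)

lemma card_coords_ge_eq_UN:
  "{x::real^'n. k \<le> card {j. x $ j \<in> F}} = (\<Union>J\<in>{J. k \<le> card J}. \<Inter>j\<in>J. (\<lambda>x. x $ j) -` F)"
proof (intro equalityI subsetI)
  fix x :: "real^'n" assume "x \<in> (\<Union>J\<in>{J. k \<le> card J}. \<Inter>j\<in>J. (\<lambda>x. x $ j) -` F)"
  then obtain J where "k \<le> card J" "J \<subseteq> {j. x $ j \<in> F}"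
    by auto
  then show "x \<in> {x. k \<le> card {j. x $ j \<in> F}}"
    using card_mono[of "{j. x $ j \<in> F}" J] by simp
qed auto

lemma closed_card_coords_ge: "closed F \<Longrightarrow> closed {x::real^'n. k \<le> card {j. x $ j \<in> F}}"
  unfolding card_coords_ge_eq_UN by (intro closed_UN closed_INT ballI closed_vimage_vec_nth) auto

lemma open_card_coords_ge: "open U \<Longrightarrow> open {x::real^'n. k \<le> card {j. x $ j \<in> U}}"
  unfolding card_coords_ge_eq_UN by (intro open_UN open_INT ballI open_vimage_vec_nth) auto

lemma closure_compl_all_but_two_subset_interior:
  assumes F: "closed F" "{t. \<not> P t} \<subseteq> F" and U: "open U" "U \<subseteq> {t. Q t}" and "F \<subseteq> U"
  shows "closure (- all_but_two P) \<subseteq> interior (all_but_two Q)"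
proof -
  have "- all_but_two P \<subseteq> {x. 3 \<le> card {j. x $ j \<in> F}}"
  proof
    fix x assume "x \<in> - all_but_two P"
    then have "2 < card {j. \<not> P (x $ j)}"
      by (simp add: all_but_two_def)
    also have "\<dots> \<le> card {j. x $ j \<in> F}"
      using F(2) by (intro card_mono) auto
    finally show "x \<in> {x. 3 \<le> card {j. x $ j \<in> F}}"
      by simp
  qed
  then have "closure (- all_but_two P) \<subseteq> {x. 3 \<le> card {j. x $ j \<in> F}}"
    by (rule closure_minimal[OF _ closed_card_coords_ge[OF F(1)]])
  also have "\<dots> \<subseteq> {x. 3 \<le> card {j. x $ j \<in> U}}"
  proof (rule Collect_mono, rule impI)
    fix x :: "real^5" assume "3 \<le> card {j. x $ j \<in> F}"
    moreover have "card {j. x $ j \<in> F} \<le> card {j. x $ j \<in> U}"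
      using \<open>F \<subseteq> U\<close> by (intro card_mono) auto
    ultimately show "3 \<le> card {j. x $ j \<in> U}"
      by simp
  qed
  also have "\<dots> \<subseteq> interior (all_but_two Q)"
  proof (rule interior_maximal[OF _ open_card_coords_ge[OF U(1)]], safe)
    fix x :: "real^5" assume "3 \<le> card {j. x $ j \<in> U}"
    moreover have "card {j. \<not> Q (x $ j)} \<le> card (UNIV - {j. x $ j \<in> U})"
      using U(2) by (intro card_mono) auto
    moreover have "card (UNIV - {j. x $ j \<in> U}) = 5 - card {j. x $ j \<in> U}"
      by (simp add: card_Diff_subset)
    ultimately show "x \<in> all_but_two Q"
      by (simp add: all_but_two_def)
  qed
  finally show ?thesis .
qed

lemma closure_compl_nbhd0_subset_interior: "closure (- nbhd0) \<subseteq> interior nbhd1_wide"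
proof -
  let ?F = "{t::real. \<forall>n::int. 1/4 \<le> \<bar>t - of_int n\<bar>}"
  let ?U = "{t::real. \<exists>n::int. \<bar>t - of_int n - 1/2\<bar> < 3/8}"
  have "?F \<subseteq> ?U"
  proof clarify
    fix t :: real assume far: "\<forall>n::int. 1/4 \<le> \<bar>t - of_int n\<bar>"
    have "\<bar>t - of_int \<lfloor>t\<rfloor> - 1/2\<bar> < 3/8"
      using far[rule_format, of "\<lfloor>t\<rfloor>"] far[rule_format, of "\<lfloor>t\<rfloor> + 1"]
        of_int_floor_le[of t] real_of_int_floor_add_one_gt[of t] by linarith
    then show "\<exists>n::int. \<bar>t - of_int n - 1/2\<bar> < 3/8" ..
  qed
  moreover have "closed ?F"
    by (intro closed_Collect_all closed_Collect_le continuous_intros)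
  moreover have "open ?U"
    by (intro open_Collect_ex open_Collect_less continuous_intros)
  moreover have "{t. \<not> grid_near 0 (1/4) t} \<subseteq> ?F"
    by (auto simp: grid_near_def not_le less_imp_le)
  moreover have "?U \<subseteq> {t. grid_near (1/2) (3/8) t}"
    unfolding grid_near_def by (blast intro: less_imp_le)
  ultimately show ?thesis
    by (intro closure_compl_all_but_two_subset_interior[where F = ?F and U = ?U])
qed

lemma iso_hom_induced_excision_nbhd0:
  "hom_induced p (top_of_set nbhd0) (nbhd0 \<inter> nbhd1_wide) euclidean nbhd1_wide id
    \<in> iso (relative_homology_group p (top_of_set nbhd0) (nbhd0 \<inter> nbhd1_wide))
          (relative_homology_group p euclidean nbhd1_wide)"
proof -
  have "hom_induced p (subtopology euclidean (UNIV - - nbhd0)) (nbhd1_wide - - nbhd0)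
      (subtopology euclidean UNIV) nbhd1_wide id
    \<in> iso (relative_homology_group p (subtopology euclidean (UNIV - - nbhd0)) (nbhd1_wide - - nbhd0))
          (relative_homology_group p (subtopology euclidean UNIV) nbhd1_wide)"
    using closure_compl_nbhd0_subset_interior by (intro homology_excision_axiom) auto
  moreover have "UNIV - - nbhd0 = nbhd0" "nbhd1_wide - - nbhd0 = nbhd0 \<inter> nbhd1_wide"
    by auto
  ultimately show ?thesis
    by simp
qed

lemma iso_hom_induced_excisive_nbhds:
  "hom_induced p (top_of_set nbhd0) (nbhd0 \<inter> nbhd1) euclidean nbhd1 id
    \<in> iso (relative_homology_group p (top_of_set nbhd0) (nbhd0 \<inter> nbhd1))
          (relative_homology_group p euclidean nbhd1)"
proof -
  let ?E = "hom_induced p (top_of_set nbhd0) (nbhd0 \<inter> nbhd1) euclidean nbhd1 id"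
  let ?widen = "hom_induced p euclidean nbhd1 euclidean nbhd1_wide id"
  let ?widen_in_nbhd0 = "hom_induced p (top_of_set nbhd0) (nbhd0 \<inter> nbhd1) (top_of_set nbhd0) (nbhd0 \<inter> nbhd1_wide) id"
  let ?excise = "hom_induced p (top_of_set nbhd0) (nbhd0 \<inter> nbhd1_wide) euclidean nbhd1_wide id"
  let ?R = "relative_homology_group p (top_of_set nbhd0) (nbhd0 \<inter> nbhd1)"
  let ?Q = "relative_homology_group p euclidean nbhd1"
  let ?Q_wide = "relative_homology_group p euclidean nbhd1_wide"
  have funcsets: "id \<in> nbhd0 \<inter> nbhd1 \<rightarrow> nbhd1" "id \<in> nbhd1 \<rightarrow> nbhd1_wide"
    "id \<in> nbhd0 \<inter> nbhd1 \<rightarrow> nbhd0 \<inter> nbhd1_wide" "id \<in> nbhd0 \<inter> nbhd1_wide \<rightarrow> nbhd1_wide"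
    using nbhd1_subset_nbhd1_wide by auto
  have "?widen \<circ> ?E = hom_induced p (top_of_set nbhd0) (nbhd0 \<inter> nbhd1) euclidean nbhd1_wide (id \<circ> id)"
    by (rule hom_induced_compose[OF continuous_map_id_subt funcsets(1) continuous_map_id funcsets(2), symmetric])
  also have "\<dots> = ?excise \<circ> ?widen_in_nbhd0"
    by (rule hom_induced_compose[OF continuous_map_id funcsets(3) continuous_map_id_subt funcsets(4)])
  finally have "?widen \<circ> ?E = ?excise \<circ> ?widen_in_nbhd0" .
  moreover have "?excise \<circ> ?widen_in_nbhd0 \<in> iso ?R ?Q_wide"
    by (rule iso_set_trans[OF iso_hom_induced_nbhd0_Int_nbhd1_wide iso_hom_induced_excision_nbhd0])
  ultimately have comp_bij: "bij_betw (?widen \<circ> ?E) (carrier ?R) (carrier ?Q_wide)"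
    by (simp only: iso_def mem_Collect_eq)
  have widen_bij: "bij_betw ?widen (carrier ?Q) (carrier ?Q_wide)"
    using iso_hom_induced_nbhd1_wide by (simp only: iso_def mem_Collect_eq)
  have "?E ` carrier ?R \<subseteq> carrier ?Q"
    by (rule image_subsetI) (rule hom_induced_carrier)
  then have "bij_betw ?E (carrier ?R) (carrier ?Q)"
    using comp_bij by (simp only: bij_betw_comp_iff2[OF widen_bij])
  then show ?thesis
    by (rule isoI[OF hom_induced_hom])
qed

theorem lemmaA2:
  shows "(\<lambda>a. (hom_induced 2 (top_of_set Mtilde) {} (top_of_set Z0) {} r0 a,
               hom_induced 2 (top_of_set Mtilde) {} (top_of_set Z1) {} r1 a))
         \<in> iso (homology_group 2 (top_of_set Mtilde))
               (homology_group 2 (top_of_set Z0) \<times>\<times> homology_group 2 (top_of_set Z1))"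
proof -
  have inclusions:
    "(\<lambda>a. (hom_induced 2 (top_of_set Mtilde) {} (top_of_set nbhd0) {} id a,
           hom_induced 2 (top_of_set Mtilde) {} (top_of_set nbhd1) {} id a))
      \<in> iso (homology_group 2 (top_of_set Mtilde))
            (homology_group 2 (top_of_set nbhd0) \<times>\<times> homology_group 2 (top_of_set nbhd1))"
    unfolding Mtilde_eq
    by (rule iso_hom_induced_inclusions_Int_contractible[OF contractible_space_euclidean _ _
          iso_hom_induced_excisive_nbhds]) (simp_all add: nbhd1_nonempty)
  have "continuous_map (top_of_set Mtilde) (top_of_set nbhd0) id"
    "continuous_map (top_of_set Mtilde) (top_of_set nbhd1) id"
    unfolding Mtilde_eq by auto
  from iso_paired_hom_induced_comp[OF inclusions this
      continuous_map_skeleton_retraction continuous_map_skeleton_retraction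
      iso_hom_induced_skeleton_retraction iso_hom_induced_skeleton_retraction]
  show ?thesis
    unfolding Z0_eq Z1_eq r0_eq r1_eq by simp
qed

end
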